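(* Let $P$ be a well-behaved set of vincular patterns and $n\ge1$. Let $\equiv$ be the equivalence relation on $S_n$ generated by the following rewriting rule. Whenever $\pi\in S_n$ contains an occurrence of some $\tau\in P$ with entries $x_1,\dots,x_k$ (appearing in this left-to-right order in $\pi$, in the same relative order as $\tau$), where the pair $x_ix_{i+1}$ matched to the underlined pair $\underline{k1}$ of $\tau$ occupies adjacent positions in $\pi$, then $\pi\equiv\pi'$, where $\pi'$ is obtained from $\pi$ by swapping the adjacent entries $x_i$ and $x_{i+1}$. Then: - $\equiv$ is a lattice congruence of the weak order on $S_n$; - every equivalence class of $\equiv$ contains exactly one permutation avoiding every pattern in $P$, and this permutation is the minimum of its class.
   Context: $S_n$ is the set of permutations of $[n]$ with the weak order (inclusion of inversion sets $\{(a_i,a_j):i<j,\ a_i>a_j\}$). A lattice congruence is an equivalence relation compatible with joins and meets. Vincular patterns. A vincular pattern is a permutation $\tau\in S_k$ with one underlined pair of consecutive entries. A permutation $\pi$ contains $\tau$ if it has a subsequence whose entries are in the same relative order as $\tau$ and in which the two entries matched to the underlined pair are at adjacent positions of $\pi$; otherwise $\pi$ avoids $\tau$. Well-behaved sets. A set $P$ of vincular patterns is well-behaved if each $\tau\in P$, of length $k\ge2$, has the form $\tau=A\,\underline{k1}\,B$ with $AB$ a permutation of $\{2,\dots,k-1\}$, and every pattern obtained from $\tau$ by permuting the entries within $A$ and within $B$ also lies in $P$. *)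

theory Defs
  imports Main "HOL-Combinatorics.List_Permutation"
begin

definition Sn :: "nat \<Rightarrow> nat list set" where
  "Sn n = {p. distinct p \<and> set p = {1..n}}"

definition inversions :: "nat list \<Rightarrow> (nat \<times> nat) set" where
  "inversions p = {(p ! i, p ! j) | i j. i < j \<and> j < length p \<and> p ! i > p ! j}"

definition weak_le :: "nat list \<Rightarrow> nat list \<Rightarrow> bool" where
  "weak_le p q \<longleftrightarrow> inversions p \<subseteq> inversions q"

definition is_join :: "nat \<Rightarrow> nat list \<Rightarrow> nat list \<Rightarrow> nat list \<Rightarrow> bool" where
  "is_join n j x y \<longleftrightarrow> j \<in> Sn n \<and> weak_le x j \<and> weak_le y j \<and>
     (\<forall>z\<in>Sn n. weak_le x z \<and> weak_le y z \<longrightarrow> weak_le j z)"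

definition is_meet :: "nat \<Rightarrow> nat list \<Rightarrow> nat list \<Rightarrow> nat list \<Rightarrow> bool" where
  "is_meet n m x y \<longleftrightarrow> m \<in> Sn n \<and> weak_le m x \<and> weak_le m y \<and>
     (\<forall>z\<in>Sn n. weak_le z x \<and> weak_le z y \<longrightarrow> weak_le z m)"

definition lattice_congruence :: "nat \<Rightarrow> (nat list \<Rightarrow> nat list \<Rightarrow> bool) \<Rightarrow> bool" where
  "lattice_congruence n R \<longleftrightarrow>
     (\<forall>x\<in>Sn n. R x x) \<and>
     (\<forall>x\<in>Sn n. \<forall>y\<in>Sn n. R x y \<longrightarrow> R y x) \<and>
     (\<forall>x\<in>Sn n. \<forall>y\<in>Sn n. \<forall>z\<in>Sn n. R x y \<and> R y z \<longrightarrow> R x z) \<and>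
     (\<forall>x\<in>Sn n. \<forall>y\<in>Sn n. \<forall>z\<in>Sn n. \<forall>j1 j2. R x y \<and> is_join n j1 x z \<and> is_join n j2 y z \<longrightarrow> R j1 j2) \<and>
     (\<forall>x\<in>Sn n. \<forall>y\<in>Sn n. \<forall>z\<in>Sn n. \<forall>m1 m2. R x y \<and> is_meet n m1 x z \<and> is_meet n m2 y z \<longrightarrow> R m1 m2)"

text \<open>A vincular pattern is a pair (tau, i): tau a permutation of [k] in one-line
  notation, and the underlined pair consists of the entries at positions i, i+1 (0-based).\<close>
type_synonym vpattern = "nat list \<times> nat"

definition occurrence :: "nat list \<Rightarrow> vpattern \<Rightarrow> (nat \<Rightarrow> nat) \<Rightarrow> bool" where
  "occurrence p tp idx \<longleftrightarrow> (let tau = fst tp; i = snd tp; k = length tau in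
     i + 1 < k \<and>
     (\<forall>a b. a < b \<and> b < k \<longrightarrow> idx a < idx b) \<and>
     (\<forall>a<k. idx a < length p) \<and>
     (\<forall>a<k. \<forall>b<k. p ! idx a < p ! idx b \<longleftrightarrow> tau ! a < tau ! b) \<and>
     idx (i + 1) = Suc (idx i))"

definition contains :: "nat list \<Rightarrow> vpattern \<Rightarrow> bool" where
  "contains p tp \<longleftrightarrow> (\<exists>idx. occurrence p tp idx)"

definition avoids :: "nat list \<Rightarrow> vpattern \<Rightarrow> bool" where
  "avoids p tp \<longleftrightarrow> \<not> contains p tp"

text \<open>Well-behaved sets: each (tau,i) has the form A k 1 B with underlined pair k1,
  AB a permutation of {2..k-1}, closed under permuting within A and within B.\<close>
definition well_behaved :: "vpattern set \<Rightarrow> bool" where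
  "well_behaved P \<longleftrightarrow> (\<forall>(tau, i)\<in>P.
     length tau \<ge> 2 \<and> i + 1 < length tau \<and>
     tau ! i = length tau \<and> tau ! (i + 1) = 1 \<and>
     distinct tau \<and> set tau = {1..length tau} \<and>
     (\<forall>A' B'. A' <~~> take i tau \<and> B' <~~> drop (i + 2) tau \<longrightarrow>
        (A' @ [length tau, 1] @ B', i) \<in> P))"

definition swap_adj :: "nat list \<Rightarrow> nat \<Rightarrow> nat list" where
  "swap_adj p j = p[j := p ! Suc j, Suc j := p ! j]"

definition rewrite_step :: "vpattern set \<Rightarrow> nat list \<Rightarrow> nat list \<Rightarrow> bool" where
  "rewrite_step P p q \<longleftrightarrow>
     (\<exists>tp\<in>P. \<exists>idx. occurrence p tp idx \<and> q = swap_adj p (idx (snd tp)))"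

text \<open>The equivalence relation generated by the rewriting rule (on lists; it preserves S_n).\<close>
definition pattern_equiv :: "vpattern set \<Rightarrow> nat list \<Rightarrow> nat list \<Rightarrow> bool" where
  "pattern_equiv P = (\<lambda>p q. rewrite_step P p q \<or> rewrite_step P q p)\<^sup>*\<^sup>*"

end

theory Submission
  imports Defs
begin

text \<open>If \<open>\<pi>\<close> contains an occurrence of a pattern of \<open>P\<close> whose underlined pair sits at
  positions \<open>j, j + 1\<close>, then \<open>j\<close> is a descent of \<open>\<pi>\<close> (the pair matches the largest and the smallest
  entry of the pattern), so orienting each rewriting step downwards in the weak order gives a
  terminating relation, and so does its converse. Contractible descents survive swaps far away
  (using that \<open>P\<close> is closed under permuting \<open>A\<close> and \<open>B\<close>) and travel along the braid moves of a
  monotone triple of adjacent entries; this yields local confluence in both directions, so by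
  Newman's lemma every class has a unique bottom element, which is its unique \<open>P\<close>-avoider, and a
  unique top element. The same diamonds show that the bottom and top projections are order
  preserving, and an equivalence relation whose bottom and top projections are order preserving is
  compatible with meets and joins.\<close>

section \<open>Normal forms of terminating locally confluent relations\<close>

locale terminating_wcr =
  fixes S :: "'a set" and R :: "'a \<Rightarrow> 'a \<Rightarrow> bool" and f :: "'a \<Rightarrow> nat"
  assumes step_in_iff: "R x y \<Longrightarrow> x \<in> S \<longleftrightarrow> y \<in> S"
    and step_decreases: "x \<in> S \<Longrightarrow> R x y \<Longrightarrow> f y < f x"
    and local_confluence: "x \<in> S \<Longrightarrow> R x y \<Longrightarrow> R x z \<Longrightarrow> \<exists>u. R\<^sup>*\<^sup>* y u \<and> R\<^sup>*\<^sup>* z u"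
begin

definition normal :: "'a \<Rightarrow> bool" where
  "normal x \<longleftrightarrow> \<not> (\<exists>y. R x y)"

definition nf :: "'a \<Rightarrow> 'a" where
  "nf x = (THE s. R\<^sup>*\<^sup>* x s \<and> normal s)"

lemma rtranclp_in_iff: "R\<^sup>*\<^sup>* x y \<Longrightarrow> x \<in> S \<longleftrightarrow> y \<in> S"
  by (induction rule: rtranclp_induct) (auto dest: step_in_iff)

lemma equivclp_in_iff: "equivclp R x y \<Longrightarrow> x \<in> S \<longleftrightarrow> y \<in> S"
  by (induction rule: equivclp_induct) (auto dest: step_in_iff)

lemma normal_rtranclp_eq: "normal x \<Longrightarrow> R\<^sup>*\<^sup>* x y \<Longrightarrow> y = x"
  by (auto simp: normal_def elim: converse_rtranclpE)

lemma normal_form_exists: "x \<in> S \<Longrightarrow> \<exists>s. R\<^sup>*\<^sup>* x s \<and> normal s"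
proof (induction "f x" arbitrary: x rule: less_induct)
  case less
  show ?case
  proof (cases "normal x")
    case False
    then obtain y where y: "R x y" by (auto simp: normal_def)
    have "y \<in> S" using less.prems y step_in_iff by blast
    then obtain s where "R\<^sup>*\<^sup>* y s" "normal s"
      using less.hyps[OF step_decreases[OF less.prems y]] by blast
    with y show ?thesis by (meson converse_rtranclp_into_rtranclp)
  qed auto
qed

lemma normal_form_unique:
  "x \<in> S \<Longrightarrow> R\<^sup>*\<^sup>* x s \<Longrightarrow> normal s \<Longrightarrow> R\<^sup>*\<^sup>* x t \<Longrightarrow> normal t \<Longrightarrow> s = t"
proof (induction "f x" arbitrary: x s t rule: less_induct)
  case less
  show ?case
  proof (cases "normal x")
    case True
    then show ?thesis
      using normal_rtranclp_eq[OF True less.prems(2)] normal_rtranclp_eq[OF True less.prems(4)] by simp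
  next
    case False
    then have "x \<noteq> s" "x \<noteq> t" using less.prems(3,5) by auto
    obtain y where y: "R x y" "R\<^sup>*\<^sup>* y s"
      using less.prems(2) \<open>x \<noteq> s\<close> by (blast elim: converse_rtranclpE)
    obtain z where z: "R x z" "R\<^sup>*\<^sup>* z t"
      using less.prems(4) \<open>x \<noteq> t\<close> by (blast elim: converse_rtranclpE)
    obtain u where u: "R\<^sup>*\<^sup>* y u" "R\<^sup>*\<^sup>* z u"
      using local_confluence[OF less.prems(1) y(1) z(1)] by blast
    have yz: "y \<in> S" "z \<in> S" using less.prems(1) y(1) z(1) step_in_iff by blast+
    then have "u \<in> S" using u(1) rtranclp_in_iff by blast
    then obtain v where v: "R\<^sup>*\<^sup>* u v" "normal v"
      using normal_form_exists by blast
    have "s = v"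
      using less.hyps[OF step_decreases[OF less.prems(1) y(1)] yz(1) y(2) less.prems(3)]
        rtranclp_trans[OF u(1) v(1)] v(2) by blast
    moreover have "t = v"
      using less.hyps[OF step_decreases[OF less.prems(1) z(1)] yz(2) z(2) less.prems(5)]
        rtranclp_trans[OF u(2) v(1)] v(2) by blast
    ultimately show ?thesis by simp
  qed
qed

lemma nf_spec: "x \<in> S \<Longrightarrow> R\<^sup>*\<^sup>* x (nf x) \<and> normal (nf x)"
proof -
  assume x: "x \<in> S"
  obtain s where "R\<^sup>*\<^sup>* x s" "normal s" using normal_form_exists[OF x] by blast
  then have "\<exists>!s. R\<^sup>*\<^sup>* x s \<and> normal s"
    using normal_form_unique[OF x] by blast
  then show ?thesis unfolding nf_def by (rule theI')
qed

lemma nf_eqI: "x \<in> S \<Longrightarrow> R\<^sup>*\<^sup>* x s \<Longrightarrow> normal s \<Longrightarrow> nf x = s"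
  using nf_spec normal_form_unique by (metis (no_types))

lemma nf_in: "x \<in> S \<Longrightarrow> nf x \<in> S"
  using nf_spec rtranclp_in_iff by (metis (no_types))

lemma nf_normal: "x \<in> S \<Longrightarrow> normal x \<Longrightarrow> nf x = x"
  by (rule nf_eqI) auto

lemma nf_nf: "x \<in> S \<Longrightarrow> nf (nf x) = nf x"
  using nf_spec nf_in nf_normal by (metis (no_types))

lemma nf_rtranclp: "x \<in> S \<Longrightarrow> R\<^sup>*\<^sup>* x y \<Longrightarrow> nf y = nf x"
proof -
  assume "x \<in> S" "R\<^sup>*\<^sup>* x y"
  moreover from this have "y \<in> S" using rtranclp_in_iff by blast
  ultimately show ?thesis using nf_spec[of y] nf_eqI[of x] rtranclp_trans by (metis (no_types))
qed

lemma equivclp_iff_nf_eq: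
  assumes x: "x \<in> S" and y: "y \<in> S"
  shows "equivclp R x y \<longleftrightarrow> nf x = nf y"
proof
  assume "equivclp R x y"
  then show "nf x = nf y"
  proof (induction rule: equivclp_induct)
    case (step y z)
    have "y \<in> S" using x step(1) equivclp_in_iff by blast
    from step(2) show ?case
    proof
      assume "R y z"
      then show ?thesis using nf_rtranclp[OF \<open>y \<in> S\<close> r_into_rtranclp] step(3) by metis
    next
      assume "R z y"
      then have "z \<in> S" using \<open>y \<in> S\<close> step_in_iff by blast
      with \<open>R z y\<close> show ?thesis using nf_rtranclp[OF _ r_into_rtranclp] step(3) by metis
    qed
  qed simp
next
  assume eq: "nf x = nf y"
  have "equivclp R x (nf y)" using rtranclp_into_equivclp[OF conjunct1[OF nf_spec[OF x]]] eq by simp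
  moreover have "equivclp R (nf y) y" using converse_rtranclp_into_equivclp[OF conjunct1[OF nf_spec[OF y]]] .
  ultimately show "equivclp R x y" by (rule equivclp_trans)
qed

end

locale monotone_terminating_wcr = terminating_wcr S R f
  for S :: "'a set" and R f +
  fixes le :: "'a \<Rightarrow> 'a \<Rightarrow> bool" and cover :: "'a \<Rightarrow> 'a \<Rightarrow> bool"
  assumes le_refl: "le x x"
    and le_trans: "le x y \<Longrightarrow> le y z \<Longrightarrow> le x z"
    and le_antisym: "x \<in> S \<Longrightarrow> y \<in> S \<Longrightarrow> le x y \<Longrightarrow> le y x \<Longrightarrow> x = y"
    and step_le: "x \<in> S \<Longrightarrow> R x y \<Longrightarrow> le y x"
    and cover_below: "y \<in> S \<Longrightarrow> cover y' y \<Longrightarrow> y' \<in> S \<and> f y' < f y \<and> le y' y"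
    and cover_exists: "x \<in> S \<Longrightarrow> y \<in> S \<Longrightarrow> le x y \<Longrightarrow> x \<noteq> y \<Longrightarrow> \<exists>y'. cover y' y \<and> le x y'"
    and cover_step: "y \<in> S \<Longrightarrow> cover y' y \<Longrightarrow> R y z \<Longrightarrow> \<exists>w. R\<^sup>*\<^sup>* y' w \<and> le w z"
begin

lemma rtranclp_le:
  assumes "R\<^sup>*\<^sup>* x y" and "x \<in> S"
  shows "le y x"
  using assms
proof (induction rule: rtranclp_induct)
  case (step y z)
  then have "y \<in> S" using rtranclp_in_iff by blast
  show ?case using le_trans[OF step_le[OF \<open>y \<in> S\<close> step(2)] step(3)[OF step(4)]] .
qed (rule le_refl)

lemma nf_le: "x \<in> S \<Longrightarrow> le (nf x) x"
  using nf_spec rtranclp_le by blast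

lemma nf_mono: "x \<in> S \<Longrightarrow> y \<in> S \<Longrightarrow> le x y \<Longrightarrow> le (nf x) (nf y)"
proof (induction "f y" arbitrary: x y rule: less_induct)
  case less
  show ?case
  proof (cases "x = y")
    case False
    then obtain y' where y': "cover y' y" "le x y'"
      using cover_exists less.prems by blast
    note y'_below = cover_below[OF less.prems(2) y'(1)]
    have "le (nf x) (nf y')"
      using less.hyps[of y' x] y'_below less.prems(1) y'(2) by blast
    moreover have "le (nf y') (nf y)"
    proof (cases "normal y")
      case True
      have "le (nf y') y'" using nf_le y'_below by blast
      then show ?thesis
        using le_trans y'_below nf_normal[OF less.prems(2) True] by metis
    next
      case False
      then obtain z where z: "R y z" by (auto simp: normal_def)
      then obtain w where w: "R\<^sup>*\<^sup>* y' w" "le w z"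
        using cover_step less.prems(2) y'(1) by blast
      have "z \<in> S" using z less.prems(2) step_in_iff by blast
      moreover have "w \<in> S" using w(1) y'_below rtranclp_in_iff by blast
      ultimately have "le (nf w) (nf z)"
        using less.hyps[of z w] step_decreases[OF less.prems(2) z] w(2) by blast
      moreover have "nf w = nf y'" using nf_rtranclp y'_below w(1) by blast
      moreover have "nf z = nf y" using nf_rtranclp[OF less.prems(2) r_into_rtranclp[of R, OF z]] .
      ultimately show ?thesis by simp
    qed
    ultimately show ?thesis by (rule le_trans)
  qed (simp add: le_refl)
qed

definition is_glb :: "'a \<Rightarrow> 'a \<Rightarrow> 'a \<Rightarrow> bool" where
  "is_glb m x y \<longleftrightarrow> m \<in> S \<and> le m x \<and> le m y \<and> (\<forall>z\<in>S. le z x \<and> le z y \<longrightarrow> le z m)"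

lemma nf_glb_le:
  assumes x: "x \<in> S" and xy: "equivclp R x y" and m1: "is_glb m1 x z" and m2: "is_glb m2 y z"
  shows "le (nf m1) (nf m2)"
proof -
  have S: "y \<in> S" "m1 \<in> S" "m2 \<in> S"
    using x xy m1 m2 equivclp_in_iff unfolding is_glb_def by blast+
  have "le (nf m1) (nf x)" using x m1 S(2) nf_mono unfolding is_glb_def by blast
  moreover have "nf x = nf y" using x xy S(1) equivclp_iff_nf_eq by blast
  moreover have "le (nf y) y" using nf_le S(1) by blast
  ultimately have "le (nf m1) y" using le_trans by metis
  moreover have "le (nf m1) z"
    using le_trans[OF nf_le[OF S(2)]] m1 unfolding is_glb_def by blast
  ultimately have "le (nf m1) m2" using m2 nf_in S(2) unfolding is_glb_def by blast
  then have "le (nf (nf m1)) (nf m2)" using nf_mono nf_in S(2,3) by blast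
  then show ?thesis using nf_nf S(2) by simp
qed

lemma glb_compatible:
  assumes x: "x \<in> S" and xy: "equivclp R x y" and m1: "is_glb m1 x z" and m2: "is_glb m2 y z"
  shows "equivclp R m1 m2"
proof -
  have S: "y \<in> S" "m1 \<in> S" "m2 \<in> S"
    using x xy m1 m2 equivclp_in_iff unfolding is_glb_def by blast+
  have "le (nf m1) (nf m2)" using nf_glb_le[OF x xy m1 m2] .
  moreover have "le (nf m2) (nf m1)" using nf_glb_le[OF S(1) equivclp_sym[OF xy] m2 m1] .
  ultimately show ?thesis using le_antisym nf_in S(2,3) equivclp_iff_nf_eq by blast
qed

end

section \<open>Permutations and their inversion sets\<close>

lemma length_swap_adj [simp]: "length (swap_adj p j) = length p"
  by (simp add: swap_adj_def)

lemma nth_swap_adj: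
  assumes "Suc j < length p" "r < length p"
  shows "swap_adj p j ! r = (if r = j then p ! Suc j else if r = Suc j then p ! j else p ! r)"
  using assms by (auto simp: swap_adj_def nth_list_update)

lemma mset_swap_adj: "Suc j < length p \<Longrightarrow> mset (swap_adj p j) = mset p"
  unfolding swap_adj_def by (rule mset_swap) auto

lemma distinct_swap_adj: "Suc j < length p \<Longrightarrow> distinct (swap_adj p j) \<longleftrightarrow> distinct p"
  using mset_eq_imp_distinct_iff[OF mset_swap_adj] .

lemma set_swap_adj: "Suc j < length p \<Longrightarrow> set (swap_adj p j) = set p"
  using mset_eq_setD[OF mset_swap_adj] .

lemma Sn_swap_adj: "Suc j < length p \<Longrightarrow> swap_adj p j \<in> Sn n \<longleftrightarrow> p \<in> Sn n"
  unfolding Sn_def by (simp add: distinct_swap_adj set_swap_adj)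

lemma length_Sn: "p \<in> Sn n \<Longrightarrow> length p = n"
  unfolding Sn_def using distinct_card by fastforce

lemma swap_adj_swap_adj [simp]: "Suc j < length p \<Longrightarrow> swap_adj (swap_adj p j) j = p"
  by (rule nth_equalityI) (auto simp: nth_swap_adj)

lemma swap_adj_commute:
  assumes "Suc j < length p" "Suc k < length p" "Suc j < k \<or> Suc k < j"
  shows "swap_adj (swap_adj p j) k = swap_adj (swap_adj p k) j"
  using assms by (intro nth_equalityI) (auto simp: nth_swap_adj)

lemma swap_adj_braid:
  assumes "Suc (Suc m) < length p"
  shows "swap_adj (swap_adj (swap_adj p (Suc m)) m) (Suc m) = swap_adj (swap_adj (swap_adj p m) (Suc m)) m"
  using assms by (intro nth_equalityI) (auto simp: nth_swap_adj)

definition pos :: "'a list \<Rightarrow> 'a \<Rightarrow> nat" where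
  "pos xs x = (THE i. i < length xs \<and> xs ! i = x)"

lemma pos_nth [simp]: "distinct xs \<Longrightarrow> i < length xs \<Longrightarrow> pos xs (xs ! i) = i"
  unfolding pos_def by (rule the_equality) (auto simp: nth_eq_iff_index_eq)

lemma pos_less_length: "distinct xs \<Longrightarrow> x \<in> set xs \<Longrightarrow> pos xs x < length xs"
  by (metis in_set_conv_nth pos_nth)

lemma nth_pos [simp]: "distinct xs \<Longrightarrow> x \<in> set xs \<Longrightarrow> xs ! pos xs x = x"
  by (metis in_set_conv_nth pos_nth)

lemma pos_eq_iff: "distinct xs \<Longrightarrow> x \<in> set xs \<Longrightarrow> y \<in> set xs \<Longrightarrow> pos xs x = pos xs y \<longleftrightarrow> x = y"
  by (metis nth_pos)

lemma pos_image: "distinct xs \<Longrightarrow> pos xs ` set xs = {..<length xs}"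
  by (force simp: in_set_conv_nth image_iff)

lemma pos_swap_adj:
  assumes "distinct p" "Suc j < length p" "v \<in> set p"
  shows "pos (swap_adj p j) v = (if v = p ! j then Suc j else if v = p ! Suc j then j else pos p v)"
proof -
  have d: "distinct (swap_adj p j)" using assms by (simp add: distinct_swap_adj)
  obtain i where i: "i < length p" "v = p ! i" using assms(3) by (auto simp: in_set_conv_nth)
  then show ?thesis
    using pos_nth[OF d, of i] pos_nth[OF d, of j] pos_nth[OF d, of "Suc j"] assms
    by (auto simp: nth_swap_adj nth_eq_iff_index_eq)
qed

lemma inversions_iff:
  assumes "distinct p"
  shows "(u, v) \<in> inversions p \<longleftrightarrow> u \<in> set p \<and> v \<in> set p \<and> v < u \<and> pos p u < pos p v"
proof
  assume "(u, v) \<in> inversions p"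
  then obtain i j where "i < j" "j < length p" "u = p ! i" "v = p ! j" "v < u"
    unfolding inversions_def by auto
  with assms show "u \<in> set p \<and> v \<in> set p \<and> v < u \<and> pos p u < pos p v" by auto
next
  assume uv: "u \<in> set p \<and> v \<in> set p \<and> v < u \<and> pos p u < pos p v"
  have "pos p v < length p" using uv pos_less_length[OF assms, of v] by simp
  then show "(u, v) \<in> inversions p"
    unfolding inversions_def
    using uv assms by (intro CollectI exI[of _ "pos p u"] exI[of _ "pos p v"]) auto
qed

lemma finite_inversions: "finite (inversions p)"
proof (rule finite_subset)
  show "inversions p \<subseteq> set p \<times> set p" unfolding inversions_def by auto
qed auto

lemma descent_in_inversions:
  "Suc j < length p \<Longrightarrow> p ! Suc j < p ! j \<Longrightarrow> (p ! j, p ! Suc j) \<in> inversions p"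
  unfolding inversions_def by blast

lemma inversions_swap_descent:
  assumes d: "distinct p" and j: "Suc j < length p" and desc: "p ! Suc j < p ! j"
  shows "inversions (swap_adj p j) = inversions p - {(p ! j, p ! Suc j)}"
proof -
  have d': "distinct (swap_adj p j)" and s': "set (swap_adj p j) = set p"
    using d j by (simp_all add: distinct_swap_adj set_swap_adj)
  have pos_j: "pos p (p ! j) = j" "pos p (p ! Suc j) = Suc j" using d j by auto
  have pos_other: "pos p u \<noteq> j \<and> pos p u \<noteq> Suc j"
    if "u \<in> set p" "u \<noteq> p ! j" "u \<noteq> p ! Suc j" for u
    using that d nth_pos by metis
  have "(u, v) \<in> inversions (swap_adj p j) \<longleftrightarrow> (u, v) \<in> inversions p - {(p ! j, p ! Suc j)}" for u v
    unfolding inversions_iff[OF d'] inversions_iff[OF d] s' Diff_iff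
    using pos_swap_adj[OF d j] pos_j pos_other[of u] pos_other[of v] desc by (auto split: if_splits)
  then show ?thesis by auto
qed

lemma swap_descent_psubset:
  assumes "p \<in> Sn n" "Suc j < length p" "p ! Suc j < p ! j"
  shows "inversions (swap_adj p j) \<subset> inversions p"
  using assms inversions_swap_descent descent_in_inversions unfolding Sn_def by blast

lemma inversions_swap_ascent:
  assumes "distinct p" "Suc j < length p" "p ! j < p ! Suc j"
  shows "inversions (swap_adj p j) = insert (p ! Suc j, p ! j) (inversions p)"
proof -
  let ?q = "swap_adj p j"
  have "distinct ?q" using assms by (simp add: distinct_swap_adj)
  moreover have "Suc j < length ?q" "?q ! Suc j < ?q ! j" using assms by (auto simp: nth_swap_adj)
  ultimately have "inversions p = inversions ?q - {(p ! Suc j, p ! j)}"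
    using inversions_swap_descent[of ?q j] assms by (simp add: nth_swap_adj)
  moreover have "(p ! Suc j, p ! j) \<in> inversions ?q"
    using descent_in_inversions[of j ?q] assms by (simp add: nth_swap_adj)
  ultimately show ?thesis by auto
qed

lemma card_inversions_le: "distinct p \<Longrightarrow> card (inversions p) \<le> length p * length p"
proof -
  assume "distinct p"
  have "inversions p \<subseteq> set p \<times> set p" unfolding inversions_def by auto
  then have "card (inversions p) \<le> card (set p \<times> set p)" by (intro card_mono) auto
  then show ?thesis using \<open>distinct p\<close> by (simp add: card_cartesian_product distinct_card)
qed

lemma adjacent_pair_reversed:
  assumes dx: "distinct x" and dy: "distinct y" and s: "set x = set y" and ne: "x \<noteq> y"
  shows "\<exists>j. Suc j < length y \<and> pos x (y ! Suc j) < pos x (y ! j)"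
proof (rule ccontr)
  assume "\<nexists>j. Suc j < length y \<and> pos x (y ! Suc j) < pos x (y ! j)"
  then have "\<forall>i. Suc i < length y \<longrightarrow> pos x (y ! i) \<le> pos x (y ! Suc i)"
    by (meson not_less)
  then have "sorted (map (pos x) y)" by (simp add: sorted_iff_nth_Suc)
  moreover have "distinct (map (pos x) y)"
    using dx dy s by (auto simp: distinct_map inj_on_def pos_eq_iff)
  moreover have "set (map (pos x) y) = set [0..<length x]"
    using pos_image[OF dx] s by (auto simp: lessThan_atLeast0)
  ultimately have m: "map (pos x) y = [0..<length x]"
    by (simp add: sorted_distinct_set_unique)
  then have len: "length y = length x" by (metis length_map length_upt minus_nat.diff_0)
  have "y ! i = x ! i" if "i < length y" for i
  proof -
    have "pos x (y ! i) = i" using arg_cong[OF m, of "\<lambda>l. l ! i"] that len by simp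
    then show ?thesis using nth_pos[OF dx, of "y ! i"] s that by simp
  qed
  with len ne show False by (simp add: nth_equalityI)
qed

lemma descent_outside_inversions:
  assumes x: "x \<in> Sn n" and y: "y \<in> Sn n" and le: "inversions x \<subseteq> inversions y" and ne: "x \<noteq> y"
  shows "\<exists>j. Suc j < length y \<and> y ! Suc j < y ! j \<and> (y ! j, y ! Suc j) \<notin> inversions x"
proof -
  have dx: "distinct x" and dy: "distinct y" and s: "set x = set y" using x y by (auto simp: Sn_def)
  obtain j where j: "Suc j < length y" and rev: "pos x (y ! Suc j) < pos x (y ! j)"
    using adjacent_pair_reversed[OF dx dy s ne] by blast
  have mem: "y ! j \<in> set x" "y ! Suc j \<in> set x" unfolding s using j by auto
  have "\<not> y ! j < y ! Suc j"
  proof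
    assume "y ! j < y ! Suc j"
    then have "(y ! Suc j, y ! j) \<in> inversions y" using le mem rev inversions_iff[OF dx] by blast
    then show False using j dy inversions_iff[OF dy] by simp
  qed
  moreover have "y ! j \<noteq> y ! Suc j" using j dy by (simp add: nth_eq_iff_index_eq)
  ultimately show ?thesis using j rev inversions_iff[OF dx] by (auto intro!: exI[of _ j])
qed

lemma ascent_inside_inversions:
  assumes x: "x \<in> Sn n" and y: "y \<in> Sn n" and le: "inversions x \<subseteq> inversions y" and ne: "x \<noteq> y"
  shows "\<exists>j. Suc j < length x \<and> x ! j < x ! Suc j \<and> (x ! Suc j, x ! j) \<in> inversions y"
proof -
  have dx: "distinct x" and dy: "distinct y" and s: "set x = set y" using x y by (auto simp: Sn_def)
  obtain j where j: "Suc j < length x" and rev: "pos y (x ! Suc j) < pos y (x ! j)"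
    using adjacent_pair_reversed[OF dy dx s[symmetric]] ne by auto
  have mem: "x ! j \<in> set y" "x ! Suc j \<in> set y" unfolding s[symmetric] using j by auto
  have "\<not> x ! Suc j < x ! j"
  proof
    assume "x ! Suc j < x ! j"
    then have "(x ! j, x ! Suc j) \<in> inversions x" using descent_in_inversions[OF j] by blast
    then have "(x ! j, x ! Suc j) \<in> inversions y" using le by blast
    then show False using rev inversions_iff[OF dy] by simp
  qed
  moreover have "x ! j \<noteq> x ! Suc j" using j dx by (simp add: nth_eq_iff_index_eq)
  ultimately show ?thesis using j rev mem inversions_iff[OF dy] by (auto intro!: exI[of _ j])
qed

lemma inversions_inject: "x \<in> Sn n \<Longrightarrow> y \<in> Sn n \<Longrightarrow> inversions x = inversions y \<Longrightarrow> x = y"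
  using descent_outside_inversions descent_in_inversions by blast

section \<open>Occurrences of well-behaved patterns\<close>

definition contractible :: "vpattern set \<Rightarrow> nat list \<Rightarrow> nat \<Rightarrow> bool" where
  "contractible P p j \<longleftrightarrow> (\<exists>tp\<in>P. \<exists>idx. occurrence p tp idx \<and> idx (snd tp) = j)"

lemma rewrite_step_iff: "rewrite_step P p q \<longleftrightarrow> (\<exists>j. contractible P p j \<and> q = swap_adj p j)"
  unfolding rewrite_step_def contractible_def by blast

lemma avoids_iff_not_contractible: "(\<forall>tp\<in>P. avoids p tp) \<longleftrightarrow> (\<forall>j. \<not> contractible P p j)"
  unfolding avoids_def contains_def contractible_def by blast

lemma occurrence_iff:
  "occurrence p (tau, i) idx \<longleftrightarrow>
     Suc i < length tau \<and>
     (\<forall>a b. a < b \<and> b < length tau \<longrightarrow> idx a < idx b) \<and>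
     (\<forall>a<length tau. idx a < length p) \<and>
     (\<forall>a<length tau. \<forall>b<length tau. p ! idx a < p ! idx b \<longleftrightarrow> tau ! a < tau ! b) \<and>
     idx (Suc i) = Suc (idx i)"
  unfolding occurrence_def Let_def by simp

lemma well_behavedD:
  assumes "well_behaved P" "(tau, i) \<in> P"
  shows "Suc i < length tau" "tau ! i = length tau" "tau ! Suc i = 1"
    "distinct tau" "set tau = {1..length tau}"
    "\<And>A B. mset A = mset (take i tau) \<Longrightarrow> mset B = mset (drop (i + 2) tau) \<Longrightarrow>
        (A @ [length tau, 1] @ B, i) \<in> P"
  using assms unfolding well_behaved_def by fastforce+

lemma underlined_max_min:
  assumes wb: "well_behaved P" and tp: "(tau, i) \<in> P" and a: "a < length tau"
  shows "a \<noteq> i \<Longrightarrow> tau ! a < tau ! i" and "a \<noteq> Suc i \<Longrightarrow> tau ! Suc i < tau ! a"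
proof -
  note f = well_behavedD[OF wb tp]
  have "tau ! a \<in> {1..length tau}" using a f(5) nth_mem by blast
  moreover have "a \<noteq> i \<Longrightarrow> tau ! a \<noteq> tau ! i" "a \<noteq> Suc i \<Longrightarrow> tau ! a \<noteq> tau ! Suc i"
    using f(1,4) a by (simp_all add: nth_eq_iff_index_eq)
  ultimately show "a \<noteq> i \<Longrightarrow> tau ! a < tau ! i" and "a \<noteq> Suc i \<Longrightarrow> tau ! Suc i < tau ! a"
    using f(2,3) by fastforce+
qed

lemma occurrence_between:
  assumes wb: "well_behaved P" and tp: "(tau, i) \<in> P" and occ: "occurrence p (tau, i) idx"
    and a: "a < length tau"
  shows "a \<noteq> i \<Longrightarrow> p ! idx a < p ! idx i" and "a \<noteq> Suc i \<Longrightarrow> p ! idx (Suc i) < p ! idx a"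
  using occ underlined_max_min[OF wb tp a] a well_behavedD(1)[OF wb tp] unfolding occurrence_iff by auto

lemma occurrence_inj:
  "occurrence p (tau, i) idx \<Longrightarrow> a < length tau \<Longrightarrow> b < length tau \<Longrightarrow> a \<noteq> b \<Longrightarrow> idx a \<noteq> idx b"
  unfolding occurrence_iff by (metis less_irrefl linorder_neqE_nat)

text \<open>Raising the entry matched to the maximum \<open>k\<close> and lowering the one matched to the minimum
  \<open>1\<close> preserves an occurrence.\<close>
lemma occurrence_transfer:
  assumes wb: "well_behaved P" and tp: "(tau, i) \<in> P" and occ: "occurrence p (tau, i) idx"
    and mono: "\<forall>a b. a < b \<and> b < length tau \<longrightarrow> idx' a < idx' b"
    and bnd: "\<forall>a<length tau. idx' a < length q"
    and adj: "idx' (Suc i) = Suc (idx' i)"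
    and oth: "\<forall>a<length tau. a \<noteq> i \<and> a \<noteq> Suc i \<longrightarrow> q ! idx' a = p ! idx a"
    and hi: "p ! idx i \<le> q ! idx' i" and lo: "q ! idx' (Suc i) \<le> p ! idx (Suc i)"
  shows "occurrence q (tau, i) idx'"
proof -
  let ?k = "length tau"
  have si: "Suc i < ?k" using well_behavedD(1)[OF wb tp] .
  have iso: "\<forall>a<?k. \<forall>b<?k. p ! idx a < p ! idx b \<longleftrightarrow> tau ! a < tau ! b"
    using occ unfolding occurrence_iff by blast
  have "q ! idx' a < q ! idx' b \<longleftrightarrow> p ! idx a < p ! idx b" if a: "a < ?k" and b: "b < ?k" for a b
  proof -
    note va = occurrence_between[OF wb tp occ a] and vb = occurrence_between[OF wb tp occ b]
    have ii: "p ! idx (Suc i) < p ! idx i" using occurrence_between(1)[OF wb tp occ si] by simp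
    show ?thesis
      using hi lo oth a b va vb ii by (cases "a = i"; cases "a = Suc i"; cases "b = i"; cases "b = Suc i") auto
  qed
  then show ?thesis unfolding occurrence_iff using si mono bnd adj iso by auto
qed

lemma contractible_descent:
  assumes wb: "well_behaved P" and c: "contractible P p j"
  shows "Suc j < length p" "p ! Suc j < p ! j"
proof -
  obtain tau i idx where tp: "(tau, i) \<in> P" and occ: "occurrence p (tau, i) idx" and ij: "idx i = j"
    using c unfolding contractible_def by auto
  have si: "Suc i < length tau" using well_behavedD(1)[OF wb tp] .
  have sj: "idx (Suc i) = Suc j" using occ ij unfolding occurrence_iff by simp
  show "Suc j < length p" using occ si sj unfolding occurrence_iff by metis
  show "p ! Suc j < p ! j" using occurrence_between(1)[OF wb tp occ si] ij sj by simp
qed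

lemma contractible_move:
  assumes wb: "well_behaved P" and c: "contractible P p j"
    and len: "length q = length p" and j': "Suc j' < length p"
    and hi: "p ! j \<le> q ! j'" and lo: "q ! Suc j' \<le> p ! Suc j"
    and between: "\<And>r. r < length p \<Longrightarrow> r \<noteq> j \<Longrightarrow> r \<noteq> Suc j \<Longrightarrow> p ! Suc j < p ! r \<Longrightarrow> p ! r < p ! j \<Longrightarrow>
        r \<noteq> j' \<and> r \<noteq> Suc j' \<and> (r < j \<longleftrightarrow> r < j') \<and> q ! r = p ! r"
  shows "contractible P q j'"
proof -
  obtain tau i idx where tp: "(tau, i) \<in> P" and occ: "occurrence p (tau, i) idx" and ij: "idx i = j"
    using c unfolding contractible_def by auto
  let ?k = "length tau"
  have si: "Suc i < ?k" using well_behavedD(1)[OF wb tp] .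
  have mono: "\<And>a b. a < b \<Longrightarrow> b < ?k \<Longrightarrow> idx a < idx b"
    and bnd: "\<And>a. a < ?k \<Longrightarrow> idx a < length p" and sj: "idx (Suc i) = Suc j"
    using occ ij unfolding occurrence_iff by auto
  have other: "idx a \<noteq> j' \<and> idx a \<noteq> Suc j' \<and> (idx a < j \<longleftrightarrow> idx a < j') \<and> q ! idx a = p ! idx a"
    if "a < ?k" "a \<noteq> i" "a \<noteq> Suc i" for a
    using between[of "idx a"] occurrence_inj[OF occ that(1), of i] occurrence_inj[OF occ that(1), of "Suc i"]
      occurrence_between[OF wb tp occ that(1)] bnd[OF that(1)] si ij sj that by auto
  have before: "idx a < j" if "a < i" for a using mono[of a i] that si ij by simp
  have after: "Suc j < idx a" if "Suc i < a" "a < ?k" for a using mono[of "Suc i" a] that sj by simp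
  define idx' where "idx' = idx(i := j', Suc i := Suc j')"
  have "occurrence q (tau, i) idx'"
  proof (rule occurrence_transfer[OF wb tp occ])
    show "\<forall>a b. a < b \<and> b < ?k \<longrightarrow> idx' a < idx' b"
    proof (intro allI impI)
      fix a b assume ab: "a < b \<and> b < ?k"
      show "idx' a < idx' b"
      proof (cases "a < i")
        case True
        then show ?thesis using ab before[OF True] other[of a] other[of b] mono[of a b] si
          unfolding idx'_def by (cases "b = i"; cases "b = Suc i") auto
      next
        case False
        then have "a = i \<or> a = Suc i \<or> Suc i < a" using ab by linarith
        then show ?thesis using ab after[of b] other[of a] other[of b] mono[of a b]
          unfolding idx'_def by (cases "b = Suc i") auto
      qed
    qed
    show "\<forall>a<?k. idx' a < length q" using bnd j' len unfolding idx'_def by auto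
    show "idx' (Suc i) = Suc (idx' i)" unfolding idx'_def by simp
    show "\<forall>a<?k. a \<noteq> i \<and> a \<noteq> Suc i \<longrightarrow> q ! idx' a = p ! idx a"
      using other unfolding idx'_def by simp
    show "p ! idx i \<le> q ! idx' i" "q ! idx' (Suc i) \<le> p ! idx (Suc i)"
      using hi lo ij sj unfolding idx'_def by simp_all
  qed
  then show ?thesis unfolding contractible_def using tp by (force simp: idx'_def)
qed

lemma mset_take_swap_adj:
  assumes "Suc c < length xs" "Suc c < m \<or> m \<le> c"
  shows "mset (take m (swap_adj xs c)) = mset (take m xs)"
proof (cases "m \<le> c")
  case True
  then show ?thesis by (simp add: swap_adj_def)
next
  case False
  then have "take m (swap_adj xs c) = swap_adj (take m xs) c"
    using assms by (simp add: swap_adj_def take_update_swap)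
  then show ?thesis using False assms mset_swap_adj[of c "take m xs"] by simp
qed

lemma mset_drop_swap_adj:
  assumes "Suc c < length xs" "Suc c < m \<or> m \<le> c"
  shows "mset (drop m (swap_adj xs c)) = mset (drop m xs)"
proof (cases "m \<le> c")
  case True
  then have "drop m (swap_adj xs c) = swap_adj (drop m xs) (c - m)"
    using assms by (simp add: swap_adj_def drop_update_swap Suc_diff_le)
  then show ?thesis using True assms mset_swap_adj[of "c - m" "drop m xs"] by simp
next
  case False
  then show ?thesis using assms by (simp add: swap_adj_def)
qed

text \<open>Swapping two adjacent entries of an occurrence that both lie in \<open>A\<close> or both in \<open>B\<close>
  yields an occurrence of another pattern of \<open>P\<close>: this is where well-behavedness is used.\<close>
lemma occurrence_swap_adj_inside:
  assumes wb: "well_behaved P" and tp: "(tau, i) \<in> P" and occ: "occurrence p (tau, i) idx"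
    and c: "Suc c < length tau" "idx (Suc c) = Suc (idx c)" "c \<noteq> i" "c \<noteq> Suc i" "Suc c \<noteq> i"
  shows "(swap_adj tau c, i) \<in> P" and "occurrence (swap_adj p (idx c)) (swap_adj tau c, i) idx"
proof -
  let ?k = "length tau" and ?tau' = "swap_adj tau c"
  have si: "Suc i < ?k" using well_behavedD(1)[OF wb tp] .
  have bnd: "\<And>a. a < ?k \<Longrightarrow> idx a < length p"
    and iso: "\<forall>a<?k. \<forall>b<?k. p ! idx a < p ! idx b \<longleftrightarrow> tau ! a < tau ! b"
    using occ unfolding occurrence_iff by auto
  define t where "t a = (if a = c then Suc c else if a = Suc c then c else a)" for a
  have t: "t a < ?k" "?tau' ! a = tau ! t a" "swap_adj p (idx c) ! idx a = p ! idx (t a)" if "a < ?k" for a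
  proof -
    show "t a < ?k" "?tau' ! a = tau ! t a" using that c by (auto simp: t_def nth_swap_adj)
    have "a \<noteq> c \<Longrightarrow> a \<noteq> Suc c \<Longrightarrow> idx a \<noteq> idx c \<and> idx a \<noteq> Suc (idx c)"
      using occurrence_inj[OF occ that] c by (metis Suc_lessD)
    then show "swap_adj p (idx c) ! idx a = p ! idx (t a)"
      using that bnd[OF that] bnd[OF c(1)] c by (auto simp: t_def nth_swap_adj)
  qed
  show "occurrence (swap_adj p (idx c)) (?tau', i) idx"
    using occ iso t unfolding occurrence_iff by (simp del: length_swap_adj) (simp add: t)
  have tau'_i: "?tau' ! i = ?k" "?tau' ! Suc i = 1"
    using well_behavedD(2,3)[OF wb tp] c si by (auto simp: nth_swap_adj)
  have "?tau' = take i ?tau' @ [?tau' ! i, ?tau' ! Suc i] @ drop (Suc (Suc i)) ?tau'"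
    using si by (simp add: Cons_nth_drop_Suc)
  then have split: "?tau' = take i ?tau' @ [?k, 1] @ drop (i + 2) ?tau'"
    unfolding tau'_i by simp
  have "Suc c < i \<or> i \<le> c" "Suc c < i + 2 \<or> i + 2 \<le> c" using c by auto
  then have "(take i ?tau' @ [?k, 1] @ drop (i + 2) ?tau', i) \<in> P"
    using well_behavedD(6)[OF wb tp] mset_take_swap_adj[OF c(1)] mset_drop_swap_adj[OF c(1)] by simp
  then show "(?tau', i) \<in> P" using split by simp
qed

lemma occurrence_consecutive:
  assumes occ: "occurrence p (tau, i) idx" and "c < length tau" "c' < length tau"
    and "idx c' = Suc (idx c)"
  shows "c' = Suc c"
proof -
  have mono: "\<And>a b. a < b \<Longrightarrow> b < length tau \<Longrightarrow> idx a < idx b"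
    using occ unfolding occurrence_iff by auto
  have "c < c'"
  proof (rule ccontr)
    assume "\<not> c < c'"
    then have "c' < c \<or> c' = c" by auto
    then show False using mono[of c' c] assms(2,4) by auto
  qed
  moreover have "\<not> Suc c < c'" using mono[of c "Suc c"] mono[of "Suc c" c'] assms(3,4) by auto
  ultimately show ?thesis by simp
qed

lemma occurrence_swap_adj_outside:
  assumes wb: "well_behaved P" and tp: "(tau, i) \<in> P" and occ: "occurrence p (tau, i) idx"
    and k: "Suc k < length p" and far: "Suc k < idx i \<or> Suc (idx i) < k"
    and out: "\<not> (\<exists>c<length tau. \<exists>c'<length tau. idx c = k \<and> idx c' = Suc k)"
  shows "\<exists>idx'. occurrence (swap_adj p k) (tau, i) idx' \<and> idx' i = idx i"
proof -
  let ?k = "length tau"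
  have si: "Suc i < ?k" using well_behavedD(1)[OF wb tp] .
  have mono: "\<forall>a b. a < b \<and> b < ?k \<longrightarrow> idx a < idx b" and bnd: "\<And>a. a < ?k \<Longrightarrow> idx a < length p"
    and sj: "idx (Suc i) = Suc (idx i)"
    using occ unfolding occurrence_iff by auto
  define t where "t r = (if r = k then Suc k else if r = Suc k then k else r)" for r
  have "occurrence (swap_adj p k) (tau, i) (t \<circ> idx)"
  proof (rule occurrence_transfer[OF wb tp occ])
    show "\<forall>a b. a < b \<and> b < ?k \<longrightarrow> (t \<circ> idx) a < (t \<circ> idx) b"
      using mono out unfolding t_def by (smt (verit) comp_apply less_trans nat_neq_iff not_less_eq)
    show "\<forall>a<?k. (t \<circ> idx) a < length (swap_adj p k)" using bnd k unfolding t_def by auto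
    show "(t \<circ> idx) (Suc i) = Suc ((t \<circ> idx) i)" using far sj unfolding t_def by auto
    have "swap_adj p k ! t r = p ! r" if "r < length p" for r
      using that k unfolding t_def by (auto simp: nth_swap_adj)
    then show "\<forall>a<?k. a \<noteq> i \<and> a \<noteq> Suc i \<longrightarrow> swap_adj p k ! (t \<circ> idx) a = p ! idx a"
      and "p ! idx i \<le> swap_adj p k ! (t \<circ> idx) i"
      and "swap_adj p k ! (t \<circ> idx) (Suc i) \<le> p ! idx (Suc i)"
      using bnd si by auto
  qed
  then show ?thesis using far unfolding t_def by force
qed

lemma contractible_swap_adj_far:
  assumes wb: "well_behaved P" and cj: "contractible P p j" and k: "Suc k < length p"
    and far: "Suc k < j \<or> Suc j < k"
  shows "contractible P (swap_adj p k) j"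
proof -
  obtain tau i idx where tp: "(tau, i) \<in> P" and occ: "occurrence p (tau, i) idx" and ij: "idx i = j"
    using cj unfolding contractible_def by auto
  have sj: "idx (Suc i) = Suc j" using occ ij unfolding occurrence_iff by simp
  show ?thesis
  proof (cases "\<exists>c<length tau. \<exists>c'<length tau. idx c = k \<and> idx c' = Suc k")
    case True
    then obtain c c' where c: "c < length tau" "idx c = k" and c': "c' < length tau" "idx c' = Suc k"
      by blast
    have "c' = Suc c" using occurrence_consecutive[OF occ c(1) c'(1)] c(2) c'(2) by simp
    moreover have "c \<noteq> i" "c \<noteq> Suc i" "Suc c \<noteq> i" using c c' ij sj far \<open>c' = Suc c\<close> by auto
    ultimately have "(swap_adj tau c, i) \<in> P" "occurrence (swap_adj p k) (swap_adj tau c, i) idx"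
      using occurrence_swap_adj_inside[OF wb tp occ, of c] c c' by auto
    then show ?thesis unfolding contractible_def using ij by force
  next
    case False
    then show ?thesis
      using occurrence_swap_adj_outside[OF wb tp occ k] far ij tp unfolding contractible_def by force
  qed
qed

section \<open>Diamonds of the rewriting system\<close>

definition lower_cover :: "nat list \<Rightarrow> nat list \<Rightarrow> bool" where
  "lower_cover q p \<longleftrightarrow> (\<exists>j. Suc j < length p \<and> p ! Suc j < p ! j \<and> q = swap_adj p j)"

lemma lower_coverI: "Suc j < length p \<Longrightarrow> p ! Suc j < p ! j \<Longrightarrow> lower_cover (swap_adj p j) p"
  unfolding lower_cover_def by blast

lemma rewrite_stepI: "contractible P p j \<Longrightarrow> rewrite_step P p (swap_adj p j)"
  unfolding rewrite_step_iff by blast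

lemma rewrite_step_lower_cover: "well_behaved P \<Longrightarrow> rewrite_step P p q \<Longrightarrow> lower_cover q p"
  unfolding rewrite_step_iff using contractible_descent lower_coverI by blast

lemma lower_cover_Sn_iff: "lower_cover q p \<Longrightarrow> q \<in> Sn n \<longleftrightarrow> p \<in> Sn n"
  unfolding lower_cover_def using Sn_swap_adj by blast

lemma rtranclp_lower_cover_Sn_iff: "lower_cover\<^sup>*\<^sup>* q p \<Longrightarrow> q \<in> Sn n \<longleftrightarrow> p \<in> Sn n"
  by (induction rule: rtranclp_induct) (auto dest: lower_cover_Sn_iff)

lemma lower_cover_psubset: "p \<in> Sn n \<Longrightarrow> lower_cover q p \<Longrightarrow> inversions q \<subset> inversions p"
  unfolding lower_cover_def using swap_descent_psubset by blast

lemma rtranclp_lower_cover_weak_le: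
  assumes "lower_cover\<^sup>*\<^sup>* q p" and "p \<in> Sn n"
  shows "weak_le q p"
  using assms
proof (induction rule: rtranclp_induct)
  case (step y z)
  then have "y \<in> Sn n" "inversions y \<subseteq> inversions z"
    using lower_cover_Sn_iff lower_cover_psubset by blast+
  with step show ?case unfolding weak_le_def by blast
qed (simp add: weak_le_def)

text \<open>Reverses the three entries at positions \<open>m\<close>, \<open>m + 1\<close>, \<open>m + 2\<close>.\<close>
abbreviation rev3 :: "nat list \<Rightarrow> nat \<Rightarrow> nat list" where
  "rev3 p m \<equiv> swap_adj (swap_adj (swap_adj p m) (Suc m)) m"

lemma rewrite_descending_triple:
  assumes wb: "well_behaved P" and l: "Suc (Suc m) < length p"
    and d1: "p ! Suc m < p ! m" and d2: "p ! Suc (Suc m) < p ! Suc m"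
  shows "contractible P p m \<Longrightarrow> (rewrite_step P)\<^sup>*\<^sup>* (swap_adj p (Suc m)) (rev3 p m)"
    and "contractible P p (Suc m) \<Longrightarrow> (rewrite_step P)\<^sup>*\<^sup>* (swap_adj p m) (rev3 p m)"
proof -
  assume c: "contractible P p m"
  let ?q = "swap_adj p (Suc m)"
  have "contractible P ?q m"
    by (rule contractible_move[OF wb c]) (use l d1 d2 in \<open>auto simp: nth_swap_adj\<close>)
  moreover have "contractible P (swap_adj ?q m) (Suc m)"
    by (rule contractible_move[OF wb c]) (use l d1 d2 in \<open>auto simp: nth_swap_adj\<close>)
  ultimately have "(rewrite_step P)\<^sup>*\<^sup>* ?q (swap_adj (swap_adj ?q m) (Suc m))"
    by (meson rewrite_stepI converse_rtranclp_into_rtranclp r_into_rtranclp)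
  then show "(rewrite_step P)\<^sup>*\<^sup>* ?q (rev3 p m)" using swap_adj_braid[OF l] by simp
next
  assume c: "contractible P p (Suc m)"
  let ?q = "swap_adj p m"
  have "contractible P ?q (Suc m)"
    by (rule contractible_move[OF wb c]) (use l d1 d2 in \<open>auto simp: nth_swap_adj\<close>)
  moreover have "contractible P (swap_adj ?q (Suc m)) m"
    by (rule contractible_move[OF wb c]) (use l d1 d2 in \<open>auto simp: nth_swap_adj\<close>)
  ultimately show "(rewrite_step P)\<^sup>*\<^sup>* ?q (rev3 p m)"
    by (meson rewrite_stepI converse_rtranclp_into_rtranclp r_into_rtranclp)
qed

lemma rewrite_ascending_triple:
  assumes wb: "well_behaved P" and l: "Suc (Suc m) < length p"
    and a1: "p ! m < p ! Suc m" and a2: "p ! Suc m < p ! Suc (Suc m)"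
  shows "contractible P (swap_adj p m) m \<Longrightarrow> (rewrite_step P)\<^sup>*\<^sup>* (rev3 p m) (swap_adj p (Suc m))"
    and "contractible P (swap_adj p (Suc m)) (Suc m) \<Longrightarrow> (rewrite_step P)\<^sup>*\<^sup>* (rev3 p m) (swap_adj p m)"
proof -
  assume c: "contractible P (swap_adj p m) m"
  let ?q = "swap_adj (swap_adj p (Suc m)) m"
  have top: "rev3 p m = swap_adj ?q (Suc m)" using swap_adj_braid[OF l] by simp
  have "contractible P (rev3 p m) (Suc m)"
    by (rule contractible_move[OF wb c]) (use l a1 a2 in \<open>auto simp: nth_swap_adj\<close>)
  moreover have "contractible P ?q m"
    by (rule contractible_move[OF wb c]) (use l a1 a2 in \<open>auto simp: nth_swap_adj\<close>)
  ultimately show "(rewrite_step P)\<^sup>*\<^sup>* (rev3 p m) (swap_adj p (Suc m))"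
    using rewrite_stepI[of P "rev3 p m" "Suc m"] rewrite_stepI[of P ?q m] top l by force
next
  assume c: "contractible P (swap_adj p (Suc m)) (Suc m)"
  let ?q = "swap_adj (swap_adj p m) (Suc m)"
  have "contractible P (rev3 p m) m"
    by (rule contractible_move[OF wb c]) (use l a1 a2 in \<open>auto simp: nth_swap_adj\<close>)
  moreover have "contractible P ?q (Suc m)"
    by (rule contractible_move[OF wb c]) (use l a1 a2 in \<open>auto simp: nth_swap_adj\<close>)
  ultimately show "(rewrite_step P)\<^sup>*\<^sup>* (rev3 p m) (swap_adj p m)"
    using rewrite_stepI[of P "rev3 p m" m] rewrite_stepI[of P ?q "Suc m"] l by force
qed

lemma rev3_below_swaps:
  assumes l: "Suc (Suc m) < length p"
    and d1: "p ! Suc m < p ! m" and d2: "p ! Suc (Suc m) < p ! Suc m"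
  shows "lower_cover\<^sup>*\<^sup>* (rev3 p m) (swap_adj p m)" and "lower_cover\<^sup>*\<^sup>* (rev3 p m) (swap_adj p (Suc m))"
proof -
  let ?q = "swap_adj p m"
  have "lower_cover (swap_adj ?q (Suc m)) ?q" "lower_cover (rev3 p m) (swap_adj ?q (Suc m))"
    using l d1 d2 by (auto intro!: lower_coverI simp: nth_swap_adj)
  then show "lower_cover\<^sup>*\<^sup>* (rev3 p m) ?q" by (meson converse_rtranclp_into_rtranclp r_into_rtranclp)
next
  let ?q = "swap_adj p (Suc m)"
  have "lower_cover (swap_adj ?q m) ?q" "lower_cover (swap_adj (swap_adj ?q m) (Suc m)) (swap_adj ?q m)"
    using l d1 d2 by (auto intro!: lower_coverI simp: nth_swap_adj)
  then show "lower_cover\<^sup>*\<^sup>* (rev3 p m) ?q"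
    using swap_adj_braid[OF l] by (metis converse_rtranclp_into_rtranclp r_into_rtranclp)
qed

lemma rev3_above_swaps:
  assumes l: "Suc (Suc m) < length p"
    and a1: "p ! m < p ! Suc m" and a2: "p ! Suc m < p ! Suc (Suc m)"
  shows "lower_cover\<^sup>*\<^sup>* (swap_adj p m) (rev3 p m)" and "lower_cover\<^sup>*\<^sup>* (swap_adj p (Suc m)) (rev3 p m)"
proof -
  let ?q = "swap_adj (swap_adj p m) (Suc m)"
  have "lower_cover (swap_adj ?q (Suc m)) ?q" "lower_cover (swap_adj (rev3 p m) m) (rev3 p m)"
    by (rule lower_coverI; use l a1 a2 in \<open>simp add: nth_swap_adj\<close>)+
  moreover have "swap_adj ?q (Suc m) = swap_adj p m" "swap_adj (rev3 p m) m = ?q" using l by simp_all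
  ultimately show "lower_cover\<^sup>*\<^sup>* (swap_adj p m) (rev3 p m)"
    by (metis converse_rtranclp_into_rtranclp r_into_rtranclp)
next
  let ?q = "swap_adj (swap_adj p (Suc m)) m"
  have top: "rev3 p m = swap_adj ?q (Suc m)" using swap_adj_braid[OF l] by simp
  have "lower_cover (swap_adj ?q m) ?q" "lower_cover (swap_adj (rev3 p m) (Suc m)) (rev3 p m)"
    by (rule lower_coverI; use l a1 a2 in \<open>simp add: nth_swap_adj\<close>)+
  moreover have "swap_adj ?q m = swap_adj p (Suc m)" "swap_adj (rev3 p m) (Suc m) = ?q"
    using l top by simp_all
  ultimately show "lower_cover\<^sup>*\<^sup>* (swap_adj p (Suc m)) (rev3 p m)"
    by (metis converse_rtranclp_into_rtranclp r_into_rtranclp)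
qed

lemma down_diamond:
  assumes wb: "well_behaved P" and j: "Suc j < length y" "y ! Suc j < y ! j"
    and ck: "contractible P y k"
  shows "\<exists>w. (rewrite_step P)\<^sup>*\<^sup>* (swap_adj y j) w \<and> lower_cover\<^sup>*\<^sup>* w (swap_adj y k) \<and>
    (contractible P y j \<longrightarrow> (rewrite_step P)\<^sup>*\<^sup>* (swap_adj y k) w)"
proof -
  note k = contractible_descent[OF wb ck]
  consider "k = j" | "Suc k < j \<or> Suc j < k" | "k = Suc j" | "j = Suc k" by linarith
  then show ?thesis
  proof cases
    case 1
    then show ?thesis by blast
  next
    case 2
    let ?w = "swap_adj (swap_adj y j) k"
    have w: "?w = swap_adj (swap_adj y k) j" using 2 by (intro swap_adj_commute[OF j(1) k(1)]) auto
    have "rewrite_step P (swap_adj y j) ?w"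
      using rewrite_stepI contractible_swap_adj_far[OF wb ck j(1)] 2 by blast
    moreover have "lower_cover ?w (swap_adj y k)"
      unfolding w using 2 j k by (intro lower_coverI) (auto simp: nth_swap_adj)
    moreover have "rewrite_step P (swap_adj y k) ?w" if "contractible P y j"
      unfolding w using rewrite_stepI contractible_swap_adj_far[OF wb that k(1)] 2 by blast
    ultimately show ?thesis by blast
  next
    case 3
    have l: "Suc (Suc j) < length y" and d: "y ! Suc (Suc j) < y ! Suc j" using k 3 by simp_all
    show ?thesis
      using rewrite_descending_triple[OF wb l j(2) d] rev3_below_swaps[OF l j(2) d] ck 3 by blast
  next
    case 4
    have l: "Suc (Suc k) < length y" and d: "y ! Suc (Suc k) < y ! Suc k" using j 4 by simp_all
    show ?thesis
      using rewrite_descending_triple[OF wb l k(2) d] rev3_below_swaps[OF l k(2) d] ck 4 by blast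
  qed
qed

lemma up_diamond:
  assumes wb: "well_behaved P" and j: "Suc j < length y" "y ! j < y ! Suc j"
    and ck: "contractible P (swap_adj y k) k"
  shows "\<exists>w. (rewrite_step P)\<^sup>*\<^sup>* w (swap_adj y j) \<and> lower_cover\<^sup>*\<^sup>* (swap_adj y k) w \<and>
    (contractible P (swap_adj y j) j \<longrightarrow> (rewrite_step P)\<^sup>*\<^sup>* w (swap_adj y k))"
proof -
  have k: "Suc k < length y" "y ! k < y ! Suc k"
    using contractible_descent[OF wb ck] by (auto simp: nth_swap_adj)
  consider "k = j" | "Suc k < j \<or> Suc j < k" | "k = Suc j" | "j = Suc k" by linarith
  then show ?thesis
  proof cases
    case 1
    then show ?thesis by blast
  next
    case 2
    let ?w = "swap_adj (swap_adj y j) k"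
    have w: "?w = swap_adj (swap_adj y k) j" using 2 by (intro swap_adj_commute[OF j(1) k(1)]) auto
    have "contractible P ?w k"
      unfolding w using contractible_swap_adj_far[OF wb ck] j(1) 2 by auto
    then have "rewrite_step P ?w (swap_adj y j)" using rewrite_stepI[of P ?w k] k(1) by simp
    moreover have "lower_cover (swap_adj y k) ?w"
      using lower_coverI[of j ?w] w 2 j k by (auto simp: nth_swap_adj)
    moreover have "rewrite_step P ?w (swap_adj y k)" if "contractible P (swap_adj y j) j"
      using rewrite_stepI[of P ?w j] contractible_swap_adj_far[OF wb that, of k] w j(1) k(1) 2 by auto
    ultimately show ?thesis by blast
  next
    case 3
    have l: "Suc (Suc j) < length y" and a: "y ! Suc j < y ! Suc (Suc j)" using k 3 by simp_all
    show ?thesis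
      using rewrite_ascending_triple[OF wb l j(2) a] rev3_above_swaps[OF l j(2) a] ck 3 by blast
  next
    case 4
    have l: "Suc (Suc k) < length y" and a: "y ! Suc k < y ! Suc (Suc k)" using j 4 by simp_all
    show ?thesis
      using rewrite_ascending_triple[OF wb l k(2) a] rev3_above_swaps[OF l k(2) a] ck 4 by blast
  qed
qed

section \<open>Bottom and top projections\<close>

lemma rewrite_step_Sn_iff: "well_behaved P \<Longrightarrow> rewrite_step P p q \<Longrightarrow> p \<in> Sn n \<longleftrightarrow> q \<in> Sn n"
  using rewrite_step_lower_cover lower_cover_Sn_iff by blast

lemma rewrite_step_into:
  assumes "well_behaved P" and "rewrite_step P q p"
  shows "\<exists>k. Suc k < length p \<and> q = swap_adj p k \<and> contractible P (swap_adj p k) k"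
proof -
  obtain k where c: "contractible P q k" and p: "p = swap_adj q k"
    using assms(2) rewrite_step_iff by blast
  have "Suc k < length q" using contractible_descent[OF assms(1) c] by simp
  then show ?thesis using c p by auto
qed

lemma down_local_confluence:
  assumes wb: "well_behaved P" and "rewrite_step P x y" "rewrite_step P x z"
  shows "\<exists>u. (rewrite_step P)\<^sup>*\<^sup>* y u \<and> (rewrite_step P)\<^sup>*\<^sup>* z u"
proof -
  obtain j k where cj: "contractible P x j" "y = swap_adj x j" and ck: "contractible P x k" "z = swap_adj x k"
    using assms rewrite_step_iff by blast
  show ?thesis using down_diamond[OF wb contractible_descent[OF wb cj(1)] ck(1)] cj ck by blast
qed

lemma down_cover_step:
  assumes wb: "well_behaved P" and y: "y \<in> Sn n" and "lower_cover y' y" "rewrite_step P y z"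
  shows "\<exists>w. (rewrite_step P)\<^sup>*\<^sup>* y' w \<and> weak_le w z"
proof -
  obtain j where j: "Suc j < length y" "y ! Suc j < y ! j" "y' = swap_adj y j"
    using assms(3) unfolding lower_cover_def by blast
  obtain k where ck: "contractible P y k" "z = swap_adj y k"
    using assms(4) rewrite_step_iff by blast
  have "z \<in> Sn n" using y assms(4) rewrite_step_Sn_iff[OF wb] by blast
  then show ?thesis
    using down_diamond[OF wb j(1,2) ck(1)] rtranclp_lower_cover_weak_le j(3) ck(2) by blast
qed

lemma up_local_confluence:
  assumes wb: "well_behaved P" and "rewrite_step P y x" "rewrite_step P z x"
  shows "\<exists>u. (rewrite_step P)\<^sup>*\<^sup>* u y \<and> (rewrite_step P)\<^sup>*\<^sup>* u z"
proof -
  obtain j where j: "Suc j < length x" "y = swap_adj x j" "contractible P (swap_adj x j) j"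
    using rewrite_step_into[OF wb assms(2)] by blast
  obtain k where k: "z = swap_adj x k" "contractible P (swap_adj x k) k"
    using rewrite_step_into[OF wb assms(3)] by blast
  have "x ! j < x ! Suc j" using contractible_descent[OF wb j(3)] j(1) by (simp add: nth_swap_adj)
  then show ?thesis using up_diamond[OF wb j(1) _ k(2)] j k by blast
qed

lemma up_cover_step:
  assumes wb: "well_behaved P" and y: "y \<in> Sn n" and "lower_cover y y'" "rewrite_step P z y"
  shows "\<exists>w. (rewrite_step P)\<^sup>*\<^sup>* w y' \<and> weak_le z w"
proof -
  obtain j where j: "Suc j < length y'" "y' ! Suc j < y' ! j" "y = swap_adj y' j"
    using assms(3) unfolding lower_cover_def by blast
  then have y': "y' = swap_adj y j" "Suc j < length y" "y ! j < y ! Suc j" by (auto simp: nth_swap_adj)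
  obtain k where k: "z = swap_adj y k" "contractible P (swap_adj y k) k"
    using rewrite_step_into[OF wb assms(4)] by blast
  obtain w where w: "(rewrite_step P)\<^sup>*\<^sup>* w y'" "lower_cover\<^sup>*\<^sup>* z w"
    using up_diamond[OF wb y'(2,3) k(2)] y'(1) k(1) by blast
  have "z \<in> Sn n" using y assms(4) rewrite_step_Sn_iff[OF wb] by blast
  then have "w \<in> Sn n" using w(2) rtranclp_lower_cover_Sn_iff by blast
  then show ?thesis using w rtranclp_lower_cover_weak_le by blast
qed

lemma down_system:
  assumes wb: "well_behaved P"
  shows "monotone_terminating_wcr (Sn n) (rewrite_step P) (\<lambda>p. card (inversions p)) weak_le lower_cover"
proof unfold_locales
  fix x y z y'
  show "rewrite_step P x y \<Longrightarrow> x \<in> Sn n \<longleftrightarrow> y \<in> Sn n" using rewrite_step_Sn_iff[OF wb] .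
  show "x \<in> Sn n \<Longrightarrow> rewrite_step P x y \<Longrightarrow> card (inversions y) < card (inversions x)"
    using psubset_card_mono[OF finite_inversions lower_cover_psubset[OF _ rewrite_step_lower_cover[OF wb]]]
    by blast
  show "rewrite_step P x y \<Longrightarrow> rewrite_step P x z \<Longrightarrow> \<exists>u. (rewrite_step P)\<^sup>*\<^sup>* y u \<and> (rewrite_step P)\<^sup>*\<^sup>* z u"
    using down_local_confluence[OF wb] by blast
  show "weak_le x x" "weak_le x y \<Longrightarrow> weak_le y z \<Longrightarrow> weak_le x z" unfolding weak_le_def by auto
  show "x \<in> Sn n \<Longrightarrow> y \<in> Sn n \<Longrightarrow> weak_le x y \<Longrightarrow> weak_le y x \<Longrightarrow> x = y"
    unfolding weak_le_def using inversions_inject by blast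
  show "x \<in> Sn n \<Longrightarrow> rewrite_step P x y \<Longrightarrow> weak_le y x"
    unfolding weak_le_def using rewrite_step_lower_cover[OF wb] lower_cover_psubset by blast
  show "y \<in> Sn n \<Longrightarrow> lower_cover y' y \<Longrightarrow> y' \<in> Sn n \<and> card (inversions y') < card (inversions y) \<and> weak_le y' y"
    unfolding weak_le_def using lower_cover_Sn_iff lower_cover_psubset[of y n y']
      psubset_card_mono[OF finite_inversions lower_cover_psubset[of y n y']] by blast
  show "x \<in> Sn n \<Longrightarrow> y \<in> Sn n \<Longrightarrow> weak_le x y \<Longrightarrow> x \<noteq> y \<Longrightarrow> \<exists>y'. lower_cover y' y \<and> weak_le x y'"
  proof -
    assume "x \<in> Sn n" "y \<in> Sn n" "weak_le x y" "x \<noteq> y"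
    then obtain j where j: "Suc j < length y" "y ! Suc j < y ! j" "(y ! j, y ! Suc j) \<notin> inversions x"
      using descent_outside_inversions unfolding weak_le_def by blast
    then have "inversions x \<subseteq> inversions (swap_adj y j)"
      using \<open>weak_le x y\<close> \<open>y \<in> Sn n\<close> inversions_swap_descent unfolding weak_le_def Sn_def by blast
    then show ?thesis using lower_coverI[OF j(1,2)] unfolding weak_le_def by blast
  qed
  show "y \<in> Sn n \<Longrightarrow> lower_cover y' y \<Longrightarrow> rewrite_step P y z \<Longrightarrow> \<exists>w. (rewrite_step P)\<^sup>*\<^sup>* y' w \<and> weak_le w z"
    using down_cover_step[OF wb] by blast
qed

lemma lower_cover_up_measure_less:
  assumes "q \<in> Sn n" "lower_cover q p"
  shows "length p * length p - card (inversions p) < length q * length q - card (inversions q)"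
proof -
  have p: "p \<in> Sn n" and len: "length q = length p"
    using assms lower_cover_Sn_iff length_Sn by blast+
  have "card (inversions q) < card (inversions p)"
    using psubset_card_mono[OF finite_inversions lower_cover_psubset[OF p assms(2)]] .
  moreover have "card (inversions p) \<le> length p * length p"
    using p card_inversions_le unfolding Sn_def by blast
  ultimately show ?thesis unfolding len by linarith
qed

text \<open>Read backwards and with the weak order turned upside down, the rewriting relation is again
  an instance: its normal forms are the tops of the classes, and its greatest lower bounds are joins.\<close>
lemma up_system:
  assumes wb: "well_behaved P"
  shows "monotone_terminating_wcr (Sn n) (rewrite_step P)\<inverse>\<inverse>
    (\<lambda>p. length p * length p - card (inversions p)) (\<lambda>p q. weak_le q p) lower_cover\<inverse>\<inverse>"
proof unfold_locales
  fix x y z y'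
  show "(rewrite_step P)\<inverse>\<inverse> x y \<Longrightarrow> x \<in> Sn n \<longleftrightarrow> y \<in> Sn n"
    using rewrite_step_Sn_iff[OF wb, of y x n] by auto
  show "x \<in> Sn n \<Longrightarrow> (rewrite_step P)\<inverse>\<inverse> x y \<Longrightarrow>
      length y * length y - card (inversions y) < length x * length x - card (inversions x)"
    using lower_cover_up_measure_less rewrite_step_lower_cover[OF wb, of y x] by auto
  show "(rewrite_step P)\<inverse>\<inverse> x y \<Longrightarrow> (rewrite_step P)\<inverse>\<inverse> x z \<Longrightarrow>
      \<exists>u. (rewrite_step P)\<inverse>\<inverse>\<^sup>*\<^sup>* y u \<and> (rewrite_step P)\<inverse>\<inverse>\<^sup>*\<^sup>* z u"
    using up_local_confluence[OF wb, of y x z] by (auto simp: rtranclp_conversep)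
  show "weak_le x x" "weak_le y x \<Longrightarrow> weak_le z y \<Longrightarrow> weak_le z x" unfolding weak_le_def by auto
  show "x \<in> Sn n \<Longrightarrow> y \<in> Sn n \<Longrightarrow> weak_le y x \<Longrightarrow> weak_le x y \<Longrightarrow> x = y"
    unfolding weak_le_def using inversions_inject by blast
  show "x \<in> Sn n \<Longrightarrow> (rewrite_step P)\<inverse>\<inverse> x y \<Longrightarrow> weak_le x y"
    unfolding weak_le_def using rewrite_step_lower_cover[OF wb, of y x] lower_cover_psubset
      lower_cover_Sn_iff by auto
  show "y \<in> Sn n \<Longrightarrow> lower_cover\<inverse>\<inverse> y' y \<Longrightarrow>
      y' \<in> Sn n \<and> length y' * length y' - card (inversions y') < length y * length y - card (inversions y) \<and>
      weak_le y y'"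
    unfolding weak_le_def using lower_cover_Sn_iff[of y y' n] lower_cover_up_measure_less[of y n y']
      lower_cover_psubset[of y' n y] by auto
  show "x \<in> Sn n \<Longrightarrow> y \<in> Sn n \<Longrightarrow> weak_le y x \<Longrightarrow> x \<noteq> y \<Longrightarrow> \<exists>y'. lower_cover\<inverse>\<inverse> y' y \<and> weak_le y' x"
  proof -
    assume "x \<in> Sn n" "y \<in> Sn n" "weak_le y x" "x \<noteq> y"
    then obtain j where j: "Suc j < length y" "y ! j < y ! Suc j" "(y ! Suc j, y ! j) \<in> inversions x"
      using ascent_inside_inversions unfolding weak_le_def by metis
    have "distinct y" using \<open>y \<in> Sn n\<close> unfolding Sn_def by blast
    then have "inversions (swap_adj y j) \<subseteq> inversions x"
      using inversions_swap_ascent[of y j] j \<open>weak_le y x\<close> unfolding weak_le_def by simp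
    moreover have "lower_cover y (swap_adj y j)"
      using lower_coverI[of j "swap_adj y j"] j by (simp add: nth_swap_adj)
    ultimately show ?thesis unfolding weak_le_def by auto
  qed
  show "y \<in> Sn n \<Longrightarrow> lower_cover\<inverse>\<inverse> y' y \<Longrightarrow> (rewrite_step P)\<inverse>\<inverse> y z \<Longrightarrow>
      \<exists>w. (rewrite_step P)\<inverse>\<inverse>\<^sup>*\<^sup>* y' w \<and> weak_le z w"
    using up_cover_step[OF wb] by (auto simp: rtranclp_conversep)
qed

lemma pattern_equiv_eq_equivclp: "pattern_equiv P = equivclp (rewrite_step P)"
  unfolding pattern_equiv_def equivclp_def by (simp add: symclp_pointfree sup_fun_def)

context
  fixes P :: "vpattern set" and n :: nat
  assumes wb: "well_behaved P"
begin

interpretation down: monotone_terminating_wcr "Sn n" "rewrite_step P" "\<lambda>p. card (inversions p)"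
    weak_le lower_cover
  by (rule down_system[OF wb])

interpretation up: monotone_terminating_wcr "Sn n" "(rewrite_step P)\<inverse>\<inverse>"
    "\<lambda>p. length p * length p - card (inversions p)" "\<lambda>p q. weak_le q p" "lower_cover\<inverse>\<inverse>"
  by (rule up_system[OF wb])

lemma pattern_equiv_lattice_congruence: "lattice_congruence n (pattern_equiv P)"
proof -
  have "is_meet n = down.is_glb" "is_join n = up.is_glb"
    unfolding is_meet_def is_join_def down.is_glb_def up.is_glb_def by (simp_all add: fun_eq_iff)
  then have meet: "x \<in> Sn n \<Longrightarrow> equivclp (rewrite_step P) x y \<Longrightarrow> is_meet n m1 x z \<Longrightarrow>
      is_meet n m2 y z \<Longrightarrow> equivclp (rewrite_step P) m1 m2"
    and join: "x \<in> Sn n \<Longrightarrow> equivclp (rewrite_step P) x y \<Longrightarrow> is_join n j1 x z \<Longrightarrow>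
      is_join n j2 y z \<Longrightarrow> equivclp (rewrite_step P) j1 j2" for x y z m1 m2 j1 j2
    using down.glb_compatible up.glb_compatible[of x y j1 z j2] by simp_all
  show ?thesis
    unfolding lattice_congruence_def pattern_equiv_eq_equivclp
  proof (intro conjI ballI allI impI)
    fix x y z j1 j2 m1 m2
    show "equivclp (rewrite_step P) x x" by simp
    show "equivclp (rewrite_step P) y x" if "equivclp (rewrite_step P) x y"
      using that by (rule equivclp_sym)
    show "equivclp (rewrite_step P) x z" if "equivclp (rewrite_step P) x y \<and> equivclp (rewrite_step P) y z"
      using that equivclp_trans[of "rewrite_step P" x y z] by blast
    assume "x \<in> Sn n"
    then show "equivclp (rewrite_step P) j1 j2"
      if "equivclp (rewrite_step P) x y \<and> is_join n j1 x z \<and> is_join n j2 y z"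
      using that join by blast
    show "equivclp (rewrite_step P) m1 m2"
      if "equivclp (rewrite_step P) x y \<and> is_meet n m1 x z \<and> is_meet n m2 y z"
      using that meet \<open>x \<in> Sn n\<close> by blast
  qed
qed

lemma avoids_iff_normal: "(\<forall>tp\<in>P. avoids s tp) \<longleftrightarrow> down.normal s"
  unfolding avoids_iff_not_contractible down.normal_def rewrite_step_iff by blast

lemma unique_avoider:
  assumes p: "p \<in> Sn n"
  shows "\<exists>!s. s \<in> Sn n \<and> pattern_equiv P s p \<and> (\<forall>tp\<in>P. avoids s tp)"
  unfolding avoids_iff_normal pattern_equiv_eq_equivclp
proof (rule ex1I[of _ "down.nf p"])
  show "down.nf p \<in> Sn n \<and> equivclp (rewrite_step P) (down.nf p) p \<and> down.normal (down.nf p)"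
    using down.nf_in[OF p] converse_rtranclp_into_equivclp[OF conjunct1[OF down.nf_spec[OF p]]]
      conjunct2[OF down.nf_spec[OF p]] by blast
  fix s
  assume "s \<in> Sn n \<and> equivclp (rewrite_step P) s p \<and> down.normal s"
  then show "s = down.nf p" using down.equivclp_iff_nf_eq[OF _ p] down.nf_normal by metis
qed

lemma avoider_weak_le:
  assumes "s \<in> Sn n" "\<forall>tp\<in>P. avoids s tp" "q \<in> Sn n" "pattern_equiv P q s"
  shows "weak_le s q"
proof -
  have "s = down.nf s" using assms(1,2) down.nf_normal avoids_iff_normal by simp
  also have "\<dots> = down.nf q" using assms down.equivclp_iff_nf_eq pattern_equiv_eq_equivclp by simp
  finally show ?thesis using down.nf_le[OF assms(3)] by simp
qed

end

theorem mainTheorem20: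
  fixes P :: "vpattern set" and n :: nat
  assumes "well_behaved P" and "n \<ge> 1"
  shows "lattice_congruence n (pattern_equiv P) \<and>
         (\<forall>p\<in>Sn n. \<exists>!s. s \<in> Sn n \<and> pattern_equiv P s p \<and> (\<forall>tp\<in>P. avoids s tp)) \<and>
         (\<forall>s\<in>Sn n. (\<forall>tp\<in>P. avoids s tp) \<longrightarrow>
            (\<forall>q\<in>Sn n. pattern_equiv P q s \<longrightarrow> weak_le s q))"
  using pattern_equiv_lattice_congruence[OF assms(1)] unique_avoider[OF assms(1)]
    avoider_weak_le[OF assms(1)] by blast

end
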